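(* Let $(A,\mathfrak m)$ be a local ring and $I$ a proper ideal of $A$. Then $A \bowtie I$ is a Prüfer ring if and only if $A$ is a Prüfer ring and $I = aI$ for all $a \in \mathfrak m \setminus Z(A)$.
   Context: All rings are commutative with identity. For an ideal $I$ of a ring $A$, the amalgamated duplication of $A$ along $I$ is the subring $A \bowtie I := \{(a, a+i) : a \in A, i \in I\}$ of $A\times A$. $Z(A)$ is the set of zero-divisors of $A$. An ideal is regular if it contains a regular element (non-zero-divisor). A ring $R$ is a Prüfer ring if every finitely generated regular ideal of $R$ is invertible. *)

theory Defs
  imports "HOL-Algebra.Ideal"
begin

definition zero_divisors :: "('a, 'b) ring_scheme \<Rightarrow> 'a set" where
  "zero_divisors R = {a \<in> carrier R. \<exists>b \<in> carrier R. b \<noteq> \<zero>\<^bsub>R\<^esub> \<and> a \<otimes>\<^bsub>R\<^esub> b = \<zero>\<^bsub>R\<^esub>}"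

definition regular_elem :: "('a, 'b) ring_scheme \<Rightarrow> 'a \<Rightarrow> bool" where
  "regular_elem R a \<longleftrightarrow> a \<in> carrier R \<and> a \<notin> zero_divisors R"

definition regular_ideal :: "('a, 'b) ring_scheme \<Rightarrow> 'a set \<Rightarrow> bool" where
  "regular_ideal R J \<longleftrightarrow> (\<exists>a \<in> J. regular_elem R a)"

definition fin_gen_ideal :: "('a, 'b) ring_scheme \<Rightarrow> 'a set \<Rightarrow> bool" where
  "fin_gen_ideal R J \<longleftrightarrow> (\<exists>S. finite S \<and> S \<subseteq> carrier R \<and> J = Idl\<^bsub>R\<^esub> S)"

text \<open>Elements of the total ring of fractions Q(R) are represented by pairs (x, s)
  standing for x/s with s regular.  The set (R :_Q J) = {q \<in> Q(R). q J \<subseteq> R}: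
  (x,s) belongs to it iff for every j in J, j x / s lies in R, i.e. j x = r s for some r.\<close>
definition frac_colon :: "('a, 'b) ring_scheme \<Rightarrow> 'a set \<Rightarrow> ('a \<times> 'a) set" where
  "frac_colon R J = {(x, s). x \<in> carrier R \<and> regular_elem R s \<and>
     (\<forall>j \<in> J. \<exists>r \<in> carrier R. j \<otimes>\<^bsub>R\<^esub> x = r \<otimes>\<^bsub>R\<^esub> s)}"

text \<open>An ideal J is invertible iff J (R:J) = R in Q(R), i.e. 1 = \<Sum> j_k q_k with
  j_k \<in> J, q_k \<in> (R:J); here r k is the element j_k q_k of R.\<close>
definition invertible_ideal :: "('a, 'b) ring_scheme \<Rightarrow> 'a set \<Rightarrow> bool" where
  "invertible_ideal R J \<longleftrightarrow> ideal J R \<and>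
     (\<exists>(n::nat) j q r. (\<forall>k < n. j k \<in> J \<and> q k \<in> frac_colon R J \<and> r k \<in> carrier R \<and>
          j k \<otimes>\<^bsub>R\<^esub> fst (q k) = r k \<otimes>\<^bsub>R\<^esub> snd (q k))
        \<and> finsum R r {..<n} = \<one>\<^bsub>R\<^esub>)"

definition pruefer_ring :: "('a, 'b) ring_scheme \<Rightarrow> bool" where
  "pruefer_ring R \<longleftrightarrow> cring R \<and>
     (\<forall>J. ideal J R \<and> fin_gen_ideal R J \<and> regular_ideal R J \<longrightarrow> invertible_ideal R J)"

definition local_ring_max :: "('a, 'b) ring_scheme \<Rightarrow> 'a set \<Rightarrow> bool" where
  "local_ring_max A m \<longleftrightarrow> cring A \<and> maximalideal m A \<and>
     (\<forall>M. maximalideal M A \<longrightarrow> M = m)"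

definition amalg_dup :: "('a, 'b) ring_scheme \<Rightarrow> 'a set \<Rightarrow> ('a \<times> 'a) ring" where
  "amalg_dup A I =
     \<lparr>carrier = {(a, a \<oplus>\<^bsub>A\<^esub> i) | a i. a \<in> carrier A \<and> i \<in> I},
      mult = (\<lambda>x y. (fst x \<otimes>\<^bsub>A\<^esub> fst y, snd x \<otimes>\<^bsub>A\<^esub> snd y)),
      one = (\<one>\<^bsub>A\<^esub>, \<one>\<^bsub>A\<^esub>),
      zero = (\<zero>\<^bsub>A\<^esub>, \<zero>\<^bsub>A\<^esub>),
      add = (\<lambda>x y. (fst x \<oplus>\<^bsub>A\<^esub> fst y, snd x \<oplus>\<^bsub>A\<^esub> snd y))\<rparr>"

definition ideal_smult :: "('a, 'b) ring_scheme \<Rightarrow> 'a \<Rightarrow> 'a set \<Rightarrow> 'a set" where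
  "ideal_smult A a I = (\<lambda>i. a \<otimes>\<^bsub>A\<^esub> i) ` I"

end

theory Submission
  imports Defs "HOL-Algebra.Ring_Divisibility"
begin

text \<open>
  For a ring R in which 1 is never a finite sum of nonunits (a local ring, say),
  an invertible ideal is principal, and a principal ideal generated by a regular element is
  invertible; hence R is Pruefer iff every finitely generated regular ideal is generated by a
  regular element.  Both A and the duplication R = A \<bowtie> I are rings of this kind (R is
  local because the first projection R \<rightarrow> A reflects units, as I lies in m).
\<close>

lemma regular_iff:
  "regular_elem R a \<longleftrightarrow> a \<in> carrier R \<and> (\<forall>b \<in> carrier R. a \<otimes>\<^bsub>R\<^esub> b = \<zero>\<^bsub>R\<^esub> \<longrightarrow> b = \<zero>\<^bsub>R\<^esub>)"
  unfolding regular_elem_def zero_divisors_def by auto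

text \<open>Ideal introduction for commutative rings: closure under negation follows from closure
  under multiplication by -1, and two-sided closure from commutativity.\<close>
lemma (in cring) cring_idealI:
  assumes "J \<subseteq> carrier R" "\<zero> \<in> J" "\<And>x y. x \<in> J \<Longrightarrow> y \<in> J \<Longrightarrow> x \<oplus> y \<in> J"
    and "\<And>a x. a \<in> J \<Longrightarrow> x \<in> carrier R \<Longrightarrow> x \<otimes> a \<in> J"
  shows "ideal J R"
proof (rule idealI[OF ring_axioms])
  show "subgroup J (add_monoid R)"
  proof (rule subgroup.intro)
    fix x assume x: "x \<in> J"
    then have "\<ominus> x = (\<ominus> \<one>) \<otimes> x" using assms(1) by (simp add: l_minus subsetD)
    then show "inv\<^bsub>add_monoid R\<^esub> x \<in> J" using x assms by (simp add: a_inv_def[symmetric])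
  qed (use assms in auto)
next
  fix a x assume "a \<in> J" "x \<in> carrier R"
  then show "x \<otimes> a \<in> J" "a \<otimes> x \<in> J" using assms m_comm by (auto, metis subsetD)
qed

lemma (in cring) regular_cancel:
  assumes "regular_elem R s" "a \<in> carrier R" "b \<in> carrier R" "s \<otimes> a = s \<otimes> b"
  shows "a = b"
proof -
  have s: "s \<in> carrier R" using assms(1) by (simp add: regular_iff)
  have "s \<otimes> (a \<ominus> b) = s \<otimes> a \<ominus> s \<otimes> b" using assms s by algebra
  then have "s \<otimes> (a \<ominus> b) = \<zero>" using assms s by (simp add: minus_eq r_neg)
  then have "a \<ominus> b = \<zero>" using assms(1-3) by (simp add: regular_iff)
  then show ?thesis using assms(2,3) by (simp add: minus_equality r_neg)
qed

lemma (in cring) regular_divisor: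
  assumes "regular_elem R r" "r = g \<otimes> y" "g \<in> carrier R" "y \<in> carrier R"
  shows "regular_elem R g"
  unfolding regular_iff
proof (intro conjI ballI impI)
  fix c assume c: "c \<in> carrier R" "g \<otimes> c = \<zero>"
  have "r \<otimes> c = y \<otimes> (g \<otimes> c)" using assms(2-4) c(1) by (simp add: m_ac)
  also have "\<dots> = \<zero>" using c(2) assms(4) by simp
  finally show "c = \<zero>" using assms(1) c(1) by (simp add: regular_iff)
qed fact

lemma (in cring) regular_mult_unit:
  assumes "regular_elem R g" "u \<in> Units R"
  shows "regular_elem R (g \<otimes> u)"
proof -
  have g: "g \<in> carrier R" "\<And>b. b \<in> carrier R \<Longrightarrow> g \<otimes> b = \<zero> \<Longrightarrow> b = \<zero>"
    using assms(1) by (simp_all add: regular_iff)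
  have u: "u \<in> carrier R" "inv u \<in> carrier R" "inv u \<otimes> u = \<one>" using assms(2) by auto
  show ?thesis unfolding regular_iff
  proof (intro conjI ballI impI)
    show "g \<otimes> u \<in> carrier R" using g u by simp
    fix c assume c: "c \<in> carrier R" "g \<otimes> u \<otimes> c = \<zero>"
    then have "u \<otimes> c = \<zero>" using g u by (simp add: m_assoc)
    moreover have "c = inv u \<otimes> (u \<otimes> c)" using u c by (simp add: m_assoc[symmetric])
    ultimately show "c = \<zero>" using u by simp
  qed
qed

subsection \<open>Invertible versus principal ideals\<close>

definition generates :: "('a, 'b) ring_scheme \<Rightarrow> 'a \<Rightarrow> 'a set \<Rightarrow> bool" where
  "generates R g J \<longleftrightarrow> g \<in> J \<and> (\<forall>x \<in> J. \<exists>y \<in> carrier R. x = g \<otimes>\<^bsub>R\<^esub> y)"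

text \<open>1 is not a finite sum of nonunits; this holds in local rings and is all that is
  needed to make invertible ideals principal.\<close>
definition nonunit_sums :: "('a, 'b) ring_scheme \<Rightarrow> bool" where
  "nonunit_sums R \<longleftrightarrow> (\<forall>(n::nat) f. f \<in> {..<n} \<rightarrow> carrier R \<longrightarrow> finsum R f {..<n} = \<one>\<^bsub>R\<^esub> \<longrightarrow>
     (\<exists>k < n. f k \<in> Units R))"

text \<open>A generator of a regular ideal is regular, since it divides a regular element.\<close>
lemma (in cring) generator_regular:
  assumes "generates R g J" "regular_ideal R J" "ideal J R"
  shows "regular_elem R g"
proof -
  obtain r where r: "r \<in> J" "regular_elem R r" using assms(2) by (auto simp: regular_ideal_def)
  then obtain y where "y \<in> carrier R" "r = g \<otimes> y" using assms(1) by (auto simp: generates_def)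
  then show ?thesis using regular_divisor r assms(1,3) ideal.Icarr by (metis generates_def)
qed

text \<open>A principal ideal gR with g regular is invertible: g \<cdot> (1/g) = 1 with 1/g \<in> (R : gR).\<close>
lemma (in cring) regular_generator_invertible:
  assumes J: "ideal J R" and g: "generates R g J" "regular_elem R g"
  shows "invertible_ideal R J"
proof -
  have gJ: "g \<in> J" and gc: "g \<in> carrier R" using g by (simp_all add: generates_def regular_iff)
  have "(\<one>, g) \<in> frac_colon R J"
    using g gc J unfolding frac_colon_def generates_def by (auto, metis ideal.Icarr m_comm r_one)
  moreover have "finsum R (\<lambda>_. \<one>) {..<(1::nat)} = \<one>"
    by (simp add: lessThan_Suc finsum_insert)
  ultimately show ?thesis unfolding invertible_ideal_def
    using J gJ gc
    by (intro conjI exI[of _ "1::nat"] exI[of _ "\<lambda>_. g"] exI[of _ "\<lambda>_. (\<one>, g)"] exI[of _ "\<lambda>_. \<one>"]) auto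
qed

text \<open>If q = x/s lies in (R : J) and j q = u for some j \<in> J, then u J \<subseteq> j R,
  because z u = j (z q) and z q \<in> R for every z \<in> J.\<close>
lemma (in cring) colon_multiple:
  assumes J: "ideal J R" and q: "(x, s) \<in> frac_colon R J"
    and j: "j \<in> J" "j \<otimes> x = u \<otimes> s" "u \<in> carrier R" and z: "z \<in> J"
  shows "\<exists>t \<in> carrier R. z \<otimes> u = j \<otimes> t"
proof -
  have x: "x \<in> carrier R" and s: "regular_elem R s" "s \<in> carrier R"
    using q by (auto simp: frac_colon_def regular_iff)
  obtain t where t: "t \<in> carrier R" "z \<otimes> x = t \<otimes> s"
    using q z unfolding frac_colon_def by blast
  have jc: "j \<in> carrier R" and zc: "z \<in> carrier R" using J j(1) z by (simp_all add: ideal.Icarr)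
  have "s \<otimes> (z \<otimes> u) = z \<otimes> (j \<otimes> x)" using j s zc by (simp add: m_ac)
  also have "\<dots> = j \<otimes> (t \<otimes> s)" using t jc zc x by (metis m_lcomm)
  also have "\<dots> = s \<otimes> (j \<otimes> t)" using t jc s by (simp add: m_ac)
  finally have "z \<otimes> u = j \<otimes> t" using regular_cancel[OF s(1)] zc j(3) jc t(1) by simp
  then show ?thesis using t(1) by blast
qed

text \<open>In a ring where 1 is not a sum of nonunits, an invertible ideal is principal:
  some summand j_k q_k of 1 = \<Sum> j_k q_k is a unit, so J = j_k R by the previous lemma.\<close>
lemma (in cring) invertible_generator:
  assumes local: "nonunit_sums R" and inv: "invertible_ideal R J"
  shows "\<exists>g. generates R g J"
proof -
  have J: "ideal J R" using inv by (simp add: invertible_ideal_def)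
  obtain n :: nat and j q r where
    H: "\<forall>k < n. j k \<in> J \<and> q k \<in> frac_colon R J \<and> r k \<in> carrier R \<and> j k \<otimes> fst (q k) = r k \<otimes> snd (q k)"
    and S: "finsum R r {..<n} = \<one>"
    using inv unfolding invertible_ideal_def by blast
  obtain k where k: "k < n" "r k \<in> Units R"
    using local S H unfolding nonunit_sums_def by blast
  have "\<exists>y \<in> carrier R. z = j k \<otimes> y" if z: "z \<in> J" for z
  proof -
    obtain t where t: "t \<in> carrier R" "z \<otimes> r k = j k \<otimes> t"
      using colon_multiple[OF J _ _ _ _ z, of "fst (q k)" "snd (q k)" "j k" "r k"] H k by auto
    have "z = (z \<otimes> r k) \<otimes> inv (r k)"
      using k(2) ideal.Icarr[OF J z] by (simp add: m_assoc Units_closed)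
    also have "\<dots> = j k \<otimes> (t \<otimes> inv (r k))"
      using t k H ideal.Icarr[OF J] by (simp add: m_assoc)
    finally show ?thesis using t(1) k(2) by blast
  qed
  then show ?thesis using H k(1) unfolding generates_def by blast
qed

lemma (in cring) pruefer_iff_regular_principal:
  assumes "nonunit_sums R"
  shows "pruefer_ring R \<longleftrightarrow>
    (\<forall>J. ideal J R \<and> fin_gen_ideal R J \<and> regular_ideal R J \<longrightarrow> (\<exists>g. regular_elem R g \<and> generates R g J))"
  using regular_generator_invertible invertible_generator[OF assms] generator_regular is_cring
  unfolding pruefer_ring_def by meson

lemma (in cring) genideal_pair:
  assumes p: "p \<in> carrier R" and q: "q \<in> carrier R" and x: "x \<in> Idl {p, q}"
  shows "\<exists>r \<in> carrier R. \<exists>s \<in> carrier R. x = r \<otimes> p \<oplus> s \<otimes> q"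
proof -
  have "PIdl p \<union> PIdl q \<subseteq> carrier R" "{p, q} \<subseteq> PIdl p \<union> PIdl q"
    using cgenideal_self p q ideal.Icarr[OF cgenideal_ideal] by blast+
  then have "Idl {p, q} \<subseteq> PIdl p <+> PIdl q"
    using subset_Idl_subset[of "PIdl p \<union> PIdl q" "{p, q}"] union_genideal[OF cgenideal_ideal[OF p] cgenideal_ideal[OF q]] by simp
  then show ?thesis using x unfolding set_add_def' cgenideal_def by blast
qed

lemma (in ring_hom_cring) hom_genideal_subset:
  assumes "X \<subseteq> carrier R"
  shows "h ` (Idl X) \<subseteq> (Idl\<^bsub>S\<^esub> (h ` X))"
proof -
  have hX: "h ` X \<subseteq> carrier S" using assms by auto
  then have "ideal {r \<in> carrier R. h r \<in> (Idl\<^bsub>S\<^esub> (h ` X))} R"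
    using ring.ideal_vimage S.genideal_ideal by blast
  moreover have "X \<subseteq> {r \<in> carrier R. h r \<in> (Idl\<^bsub>S\<^esub> (h ` X))}"
    using assms S.genideal_self[OF hX] by auto
  ultimately show ?thesis using R.genideal_minimal by blast
qed

lemma (in ring_hom_cring) surj_hom_image_ideal:
  assumes surj: "h ` carrier R = carrier S" and J: "ideal J R"
  shows "ideal (h ` J) S"
proof (rule S.cring_idealI)
  interpret J: ideal J R by (rule J)
  show "h ` J \<subseteq> carrier S" using J.Icarr by auto
  show "\<zero>\<^bsub>S\<^esub> \<in> h ` J" using hom_zero J.zero_closed by (metis image_eqI)
  show "x \<oplus>\<^bsub>S\<^esub> y \<in> h ` J" if xy: "x \<in> h ` J" "y \<in> h ` J" for x y
  proof -
    obtain a b where "a \<in> J" "b \<in> J" "x = h a" "y = h b" using xy by blast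
    then have "x \<oplus>\<^bsub>S\<^esub> y = h (a \<oplus> b)" "a \<oplus> b \<in> J" using J.Icarr J.a_closed by simp_all
    then show ?thesis by blast
  qed
  show "s \<otimes>\<^bsub>S\<^esub> x \<in> h ` J" if x: "x \<in> h ` J" and s: "s \<in> carrier S" for x s
  proof -
    have "s \<in> h ` carrier R" using surj s by (simp only:)
    then obtain r a where "r \<in> carrier R" "s = h r" "a \<in> J" "x = h a" using x by blast
    then have "s \<otimes>\<^bsub>S\<^esub> x = h (r \<otimes> a)" "r \<otimes> a \<in> J" using J.Icarr J.I_l_closed by simp_all
    then show ?thesis by blast
  qed
qed

lemma (in ring_hom_cring) surj_hom_genideal:
  assumes surj: "h ` carrier R = carrier S" and X: "X \<subseteq> carrier R"
  shows "h ` (Idl X) = (Idl\<^bsub>S\<^esub> (h ` X))"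
proof
  show "h ` (Idl X) \<subseteq> (Idl\<^bsub>S\<^esub> (h ` X))" using hom_genideal_subset[OF X] .
  show "(Idl\<^bsub>S\<^esub> (h ` X)) \<subseteq> h ` (Idl X)"
    using S.genideal_minimal surj_hom_image_ideal[OF surj R.genideal_ideal[OF X]] R.genideal_self[OF X]
    by blast
qed

lemma (in ring_hom_cring) hom_generates:
  assumes g: "generates R g J" and J: "J \<subseteq> carrier R"
  shows "generates S (h g) (h ` J)"
  unfolding generates_def
proof (intro conjI ballI)
  show "h g \<in> h ` J" using g by (simp add: generates_def)
  fix z assume "z \<in> h ` J"
  then obtain x where x: "x \<in> J" "z = h x" by blast
  then obtain y where y: "y \<in> carrier R" "x = g \<otimes> y" using g unfolding generates_def by blast
  have "g \<in> carrier R" using g J by (auto simp: generates_def)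
  then have "z = h g \<otimes>\<^bsub>S\<^esub> h y" using x y by simp
  then show "\<exists>y \<in> carrier S. z = h g \<otimes>\<^bsub>S\<^esub> y" using y(1) by blast
qed

subsection \<open>Local rings\<close>

lemma (in ring) finsum_in_ideal:
  assumes J: "ideal J R" and f: "f \<in> F \<rightarrow> J"
  shows "finsum R f F \<in> J"
proof (cases "finite F")
  case True
  interpret J: ideal J R by (rule J)
  from True f show ?thesis
  proof (induction F rule: finite_induct)
    case (insert a F)
    then have "f \<in> F \<rightarrow> carrier R" "f a \<in> carrier R" using J.Icarr by (auto simp: Pi_iff)
    then show ?case using insert by (simp add: finsum_insert)
  qed simp
qed (simp add: finsum_infinite additive_subgroup.zero_closed[OF ideal.axioms(1)[OF J]])

text \<open>Krull: every ideal not containing 1 lies in a maximal ideal (Zorn's lemma on chains of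
  ideals avoiding 1).\<close>
lemma (in ring) ideal_in_maximalideal:
  assumes J: "ideal J R" and one: "\<one> \<notin> J"
  shows "\<exists>M. maximalideal M R \<and> J \<subseteq> M"
proof -
  define S where "S = {K. ideal K R \<and> J \<subseteq> K \<and> \<one> \<notin> K}"
  have "\<exists>M \<in> S. \<forall>K \<in> S. M \<subseteq> K \<longrightarrow> K = M"
  proof (rule subset_Zorn_nonempty)
    show "S \<noteq> {}" using J one unfolding S_def by blast
    fix C assume C: "C \<noteq> {}" "subset.chain S C"
    then have "subset.chain {K. ideal K R} C" unfolding S_def subset_chain_def by blast
    from chain_Union_is_ideal[OF this] have "ideal (\<Union>C) R" using C(1) by simp
    moreover have "C \<subseteq> S" using C(2) by (simp add: subset_chain_def)
    ultimately show "\<Union>C \<in> S" using C(1) unfolding S_def by blast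
  qed
  then obtain M where M: "M \<in> S" and M_max: "\<And>K. K \<in> S \<Longrightarrow> M \<subseteq> K \<Longrightarrow> K = M" by blast
  have "maximalideal M R"
  proof (rule maximalidealI)
    show "ideal M R" "carrier R \<noteq> M" using M unfolding S_def by auto
    fix K assume K: "ideal K R" "M \<subseteq> K" "K \<subseteq> carrier R"
    show "K = M \<or> K = carrier R"
      using M M_max[of K] K ideal.one_imp_carrier[OF K(1)] unfolding S_def by blast
  qed
  then show ?thesis using M unfolding S_def by blast
qed

locale local_ring = cring A for A (structure) + fixes m
  assumes local_max: "local_ring_max A m"
begin

lemma max_ideal: "ideal m A"
  using local_max maximalideal.axioms(1) unfolding local_ring_max_def by blast

lemma one_notin_max: "\<one> \<notin> m"
  using local_max ideal.one_imp_carrier[OF max_ideal] maximalideal.I_notcarr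
  unfolding local_ring_max_def by metis

lemma nonunit_in_max:
  assumes x: "x \<in> carrier A" "x \<notin> Units A"
  shows "x \<in> m"
proof -
  have "\<one> \<notin> PIdl x"
  proof
    assume "\<one> \<in> PIdl x"
    then obtain y where "y \<in> carrier A" "\<one> = y \<otimes> x" unfolding cgenideal_def by blast
    then show False using x unfolding Units_def by (auto simp: m_comm)
  qed
  then obtain M where "maximalideal M A" "PIdl x \<subseteq> M"
    using ideal_in_maximalideal cgenideal_ideal x(1) by blast
  then show ?thesis using local_max cgenideal_self x(1) unfolding local_ring_max_def by blast
qed

lemma unit_notin_max:
  assumes u: "u \<in> Units A" shows "u \<notin> m"
proof
  assume "u \<in> m"
  from ideal.I_l_closed[OF max_ideal this Units_inv_closed[OF u]] have "inv u \<otimes> u \<in> m" .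
  then show False using u one_notin_max by simp
qed

lemma unit_add_max:
  assumes u: "u \<in> Units A" and t: "t \<in> m"
  shows "u \<oplus> t \<in> Units A"
proof (rule ccontr)
  interpret m: ideal m A by (rule max_ideal)
  have tc: "t \<in> carrier A" using t m.Icarr by blast
  assume "u \<oplus> t \<notin> Units A"
  then have "u \<oplus> t \<in> m" using nonunit_in_max Units_closed[OF u] tc by simp
  then have "(u \<oplus> t) \<ominus> t \<in> m" using t by (simp add: a_minus_def)
  moreover have "(u \<oplus> t) \<ominus> t = u" using Units_closed[OF u] tc by algebra
  ultimately show False using unit_notin_max u by simp
qed

lemma proper_ideal_in_max:
  assumes J: "ideal J A" "J \<noteq> carrier A"
  shows "J \<subseteq> m"
proof
  fix x assume x: "x \<in> J"
  have "x \<notin> Units A"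
  proof
    assume "x \<in> Units A"
    from ideal.I_l_closed[OF J(1) x Units_inv_closed[OF this]] have "inv x \<otimes> x \<in> J" .
    then show False using \<open>x \<in> Units A\<close> ideal.one_imp_carrier[OF J(1)] J(2) by simp
  qed
  then show "x \<in> m" using nonunit_in_max ideal.Icarr[OF J(1) x] by blast
qed

text \<open>A local ring has the property that 1 is not a finite sum of nonunits, since m is
  closed under sums.\<close>
lemma local_nonunit_sums: "nonunit_sums A"
  unfolding nonunit_sums_def
proof (intro allI impI)
  fix n :: nat and f assume f: "f \<in> {..<n} \<rightarrow> carrier A" and S: "finsum A f {..<n} = \<one>"
  show "\<exists>k < n. f k \<in> Units A"
  proof (rule ccontr)
    assume "\<not> (\<exists>k < n. f k \<in> Units A)"
    then have "f \<in> {..<n} \<rightarrow> m" using f nonunit_in_max by blast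
    then show False using finsum_in_ideal[OF max_ideal] S one_notin_max by metis
  qed
qed

end

subsection \<open>The amalgamated duplication\<close>

locale amalgamation = cring A for A (structure) + fixes I
  assumes I_ideal: "ideal I A"
begin

abbreviation R :: "('a \<times> 'a) ring" where "R \<equiv> amalg_dup A I"

lemma I_carrier: "i \<in> I \<Longrightarrow> i \<in> carrier A"
  using ideal.Icarr[OF I_ideal] .

lemma dup_ops [simp]:
  "x \<otimes>\<^bsub>R\<^esub> y = (fst x \<otimes> fst y, snd x \<otimes> snd y)"
  "x \<oplus>\<^bsub>R\<^esub> y = (fst x \<oplus> fst y, snd x \<oplus> snd y)"
  "\<one>\<^bsub>R\<^esub> = (\<one>, \<one>)" "\<zero>\<^bsub>R\<^esub> = (\<zero>, \<zero>)"
  by (simp_all add: amalg_dup_def)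

lemma dup_carrier:
  "z \<in> carrier R \<longleftrightarrow> fst z \<in> carrier A \<and> snd z \<in> carrier A \<and> snd z \<ominus> fst z \<in> I"
proof
  assume "z \<in> carrier R"
  then obtain a i where z: "z = (a, a \<oplus> i)" "a \<in> carrier A" "i \<in> I"
    by (auto simp: amalg_dup_def)
  moreover have "a \<oplus> i \<ominus> a = i" using z I_carrier by algebra
  ultimately show "fst z \<in> carrier A \<and> snd z \<in> carrier A \<and> snd z \<ominus> fst z \<in> I"
    using I_carrier by auto
next
  assume z: "fst z \<in> carrier A \<and> snd z \<in> carrier A \<and> snd z \<ominus> fst z \<in> I"
  then have "z = (fst z, fst z \<oplus> (snd z \<ominus> fst z))" by (simp add: prod_eq_iff) algebra
  then show "z \<in> carrier R" using z unfolding amalg_dup_def by auto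
qed

lemma diag_in_dup: "a \<in> carrier A \<Longrightarrow> (a, a) \<in> carrier R"
  using additive_subgroup.zero_closed[OF ideal.axioms(1)[OF I_ideal]]
  by (simp add: dup_carrier minus_eq r_neg)

text \<open>A \<bowtie> I is a commutative ring; closure under products uses
  b b' - a a' = (b - a) b' + a (b' - a').\<close>
lemma dup_cring: "cring R"
proof (rule cringI)
  interpret I: ideal I A by (rule I_ideal)
  show "abelian_group R"
  proof (rule abelian_groupI)
    fix x y assume "x \<in> carrier R" "y \<in> carrier R"
    moreover have "(snd x \<oplus> snd y) \<ominus> (fst x \<oplus> fst y) = (snd x \<ominus> fst x) \<oplus> (snd y \<ominus> fst y)"
      if "x \<in> carrier R" "y \<in> carrier R" using that unfolding dup_carrier by algebra
    ultimately show "x \<oplus>\<^bsub>R\<^esub> y \<in> carrier R" by (simp add: dup_carrier)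
  next
    fix x assume x: "x \<in> carrier R"
    have "(\<ominus> snd x) \<ominus> (\<ominus> fst x) = \<ominus> (snd x \<ominus> fst x)" using x unfolding dup_carrier by algebra
    then have "(\<ominus> fst x, \<ominus> snd x) \<in> carrier R" using x by (simp add: dup_carrier)
    moreover have "(\<ominus> fst x, \<ominus> snd x) \<oplus>\<^bsub>R\<^esub> x = \<zero>\<^bsub>R\<^esub>" using x by (simp add: dup_carrier l_neg)
    ultimately show "\<exists>y \<in> carrier R. y \<oplus>\<^bsub>R\<^esub> x = \<zero>\<^bsub>R\<^esub>" by blast
  next
    show "\<zero>\<^bsub>R\<^esub> \<in> carrier R" using diag_in_dup[of \<zero>] by simp
  qed (auto simp: dup_carrier a_ac)
next
  interpret I: ideal I A by (rule I_ideal)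
  show "comm_monoid R"
  proof (rule comm_monoidI)
    fix x y assume "x \<in> carrier R" "y \<in> carrier R"
    moreover have "snd x \<otimes> snd y \<ominus> fst x \<otimes> fst y = (snd x \<ominus> fst x) \<otimes> snd y \<oplus> fst x \<otimes> (snd y \<ominus> fst y)"
      if "x \<in> carrier R" "y \<in> carrier R" using that unfolding dup_carrier by algebra
    ultimately show "x \<otimes>\<^bsub>R\<^esub> y \<in> carrier R" by (simp add: dup_carrier I.I_l_closed I.I_r_closed)
  next
    show "\<one>\<^bsub>R\<^esub> \<in> carrier R" using diag_in_dup[of \<one>] by simp
  qed (auto simp: dup_carrier m_ac)
qed (auto simp: dup_carrier l_distr)

lemma fst_hom: "ring_hom_cring R A fst"
  by (intro ring_hom_cring.intro ring_hom_cring_axioms.intro dup_cring is_cring ring_hom_memI)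
     (auto simp: dup_carrier)

lemma diag_hom: "ring_hom_cring A R (\<lambda>a. (a, a))"
  by (intro ring_hom_cring.intro ring_hom_cring_axioms.intro dup_cring is_cring ring_hom_memI)
     (auto simp: diag_in_dup)

lemma fst_surj: "fst ` carrier R = carrier A"
proof
  show "fst ` carrier R \<subseteq> carrier A" by (auto simp: dup_carrier)
  show "carrier A \<subseteq> fst ` carrier R" using diag_in_dup by (metis fst_conv image_eqI subsetI)
qed

lemma dup_regular_pair:
  assumes z: "(x, y) \<in> carrier R" and x: "regular_elem A x" and y: "regular_elem A y"
  shows "regular_elem R (x, y)"
  unfolding regular_iff
proof (intro conjI ballI impI)
  fix w assume w: "w \<in> carrier R" "(x, y) \<otimes>\<^bsub>R\<^esub> w = \<zero>\<^bsub>R\<^esub>"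
  have "x \<otimes> fst w = \<zero>" "y \<otimes> snd w = \<zero>" using w(2) by simp_all
  moreover have "fst w \<in> carrier A" "snd w \<in> carrier A" using w(1) by (simp_all add: dup_carrier)
  ultimately have "fst w = \<zero>" "snd w = \<zero>" using x y unfolding regular_iff by blast+
  then show "w = \<zero>\<^bsub>R\<^esub>" by (simp add: prod_eq_iff)
qed (rule z)

text \<open>A regular element (b, b + i) of the duplication has regular first coordinate: a
  zero-divisor c of b would give the zero-divisor (c, c) or (i c, 0) of (b, b + i).\<close>
lemma dup_regular_fst:
  assumes z: "regular_elem R z"
  shows "regular_elem A (fst z)"
proof -
  have zc: "z \<in> carrier R"
    and z_reg: "\<And>w. w \<in> carrier R \<Longrightarrow> z \<otimes>\<^bsub>R\<^esub> w = \<zero>\<^bsub>R\<^esub> \<Longrightarrow> w = \<zero>\<^bsub>R\<^esub>"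
    using z unfolding regular_iff by blast+
  define b i where "b = fst z" and "i = snd z \<ominus> fst z"
  have bc: "b \<in> carrier A" and iI: "i \<in> I" and ic: "i \<in> carrier A"
    using zc I_carrier unfolding b_def i_def dup_carrier by auto
  have z_eq: "z = (b, b \<oplus> i)"
    using zc unfolding b_def i_def dup_carrier by (simp add: prod_eq_iff) algebra
  show ?thesis unfolding regular_iff
  proof (intro conjI ballI impI)
    show "fst z \<in> carrier A" using bc b_def by simp
    fix c assume c: "c \<in> carrier A" "fst z \<otimes> c = \<zero>"
    then have bc0: "b \<otimes> c = \<zero>" using b_def by simp
    show "c = \<zero>"
    proof (cases "i \<otimes> c = \<zero>")
      case True
      then have "z \<otimes>\<^bsub>R\<^esub> (c, c) = \<zero>\<^bsub>R\<^esub>" using z_eq bc0 bc ic c by (simp add: l_distr)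
      from z_reg[OF diag_in_dup[OF c(1)] this] show ?thesis by simp
    next
      case False
      have "i \<otimes> c \<in> I" using ideal.I_r_closed[OF I_ideal iI c(1)] .
      moreover have "\<zero> \<ominus> i \<otimes> c = \<ominus> (i \<otimes> c)" using ic c by algebra
      ultimately have w: "(i \<otimes> c, \<zero>) \<in> carrier R"
        using ideal.axioms(1)[OF I_ideal] ic c by (simp add: dup_carrier additive_subgroup.a_inv_closed)
      have "b \<otimes> (i \<otimes> c) = i \<otimes> (b \<otimes> c)" using bc ic c by (simp add: m_lcomm)
      then have "z \<otimes>\<^bsub>R\<^esub> (i \<otimes> c, \<zero>) = \<zero>\<^bsub>R\<^esub>" using bc0 bc ic by (subst z_eq) simp
      from z_reg[OF w this] False show ?thesis by simp
    qed
  qed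
qed

text \<open>A pair of units is a unit in A \<bowtie> I: the difference of the inverses lies in I.\<close>
lemma dup_unit_pair:
  assumes z: "(c, d) \<in> carrier R" and c: "c \<in> Units A" and d: "d \<in> Units A"
  shows "(c, d) \<in> Units R"
proof -
  have cd: "c \<in> carrier A" "d \<in> carrier A" "d \<ominus> c \<in> I" using z by (auto simp: dup_carrier)
  have inv: "inv c \<in> carrier A" "inv d \<in> carrier A" using c d by simp_all
  have "inv c \<otimes> inv d \<otimes> (d \<ominus> c) = inv c \<otimes> (d \<otimes> inv d) \<ominus> inv d \<otimes> (c \<otimes> inv c)"
    using inv cd by algebra
  also have "\<dots> = inv c \<ominus> inv d" using c d inv by simp
  finally have "inv d \<ominus> inv c = \<ominus> (inv c \<otimes> inv d \<otimes> (d \<ominus> c))" using inv by algebra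
  moreover have "inv c \<otimes> inv d \<otimes> (d \<ominus> c) \<in> I" using ideal.I_l_closed[OF I_ideal cd(3)] inv by simp
  ultimately have "(inv c, inv d) \<in> carrier R"
    using inv additive_subgroup.a_inv_closed[OF ideal.axioms(1)[OF I_ideal]] by (simp add: dup_carrier)
  moreover have "(inv c, inv d) \<otimes>\<^bsub>R\<^esub> (c, d) = \<one>\<^bsub>R\<^esub>" "(c, d) \<otimes>\<^bsub>R\<^esub> (inv c, inv d) = \<one>\<^bsub>R\<^esub>"
    using c d by simp_all
  ultimately show ?thesis using z unfolding Units_def by (intro CollectI conjI bexI)
qed

lemma smult_eq_iff:
  assumes a: "a \<in> carrier A"
  shows "I = ideal_smult A a I \<longleftrightarrow> (\<forall>i \<in> I. \<exists>w \<in> I. i = a \<otimes> w)"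
proof -
  have "ideal_smult A a I \<subseteq> I"
    unfolding ideal_smult_def using ideal.I_l_closed[OF I_ideal _ a] by blast
  then show ?thesis unfolding ideal_smult_def by blast
qed

end

subsection \<open>Duplication of a local ring along a proper ideal\<close>

locale local_amalgamation = local_ring A m + amalgamation A I for A (structure) and m I +
  assumes I_proper: "I \<noteq> carrier A"
begin

lemma I_in_max: "I \<subseteq> m"
  using proper_ideal_in_max[OF I_ideal I_proper] .

lemma dup_unit_fst:
  assumes z: "z \<in> carrier R" and u: "fst z \<in> Units A"
  shows "z \<in> Units R"
proof -
  have "snd z = fst z \<oplus> (snd z \<ominus> fst z)" using z by (simp add: dup_carrier) algebra
  moreover have "snd z \<ominus> fst z \<in> m" using z I_in_max by (auto simp: dup_carrier)
  ultimately have "snd z \<in> Units A" using unit_add_max[OF u] by metis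
  then show ?thesis using dup_unit_pair[of "fst z" "snd z"] z u by simp
qed

lemma dup_nonunit_sums: "nonunit_sums R"
  unfolding nonunit_sums_def
proof (intro allI impI)
  interpret fst: ring_hom_cring R A fst by (rule fst_hom)
  fix n :: nat and f assume f: "f \<in> {..<n} \<rightarrow> carrier R" and S: "finsum R f {..<n} = \<one>\<^bsub>R\<^esub>"
  have "finsum A (fst \<circ> f) {..<n} = fst (finsum R f {..<n})" by (rule fst.hom_finsum[OF f, symmetric])
  also have "\<dots> = \<one>" using S by simp
  finally have "finsum A (fst \<circ> f) {..<n} = \<one>" .
  moreover have "fst \<circ> f \<in> {..<n} \<rightarrow> carrier A" using f by (auto simp: dup_carrier)
  ultimately obtain k where k: "k < n" "(fst \<circ> f) k \<in> Units A"
    using local_nonunit_sums unfolding nonunit_sums_def by blast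
  have "f k \<in> Units R" using dup_unit_fst[of "f k"] f k by auto
  then show "\<exists>k < n. f k \<in> Units R" using k(1) by blast
qed

lemma pruefer_dup_iff:
  "pruefer_ring R \<longleftrightarrow>
    (\<forall>J. ideal J R \<and> fin_gen_ideal R J \<and> regular_ideal R J \<longrightarrow> (\<exists>g. regular_elem R g \<and> generates R g J))"
  using cring.pruefer_iff_regular_principal[OF dup_cring dup_nonunit_sums] .

lemma pruefer_iff:
  "pruefer_ring A \<longleftrightarrow>
    (\<forall>J. ideal J A \<and> fin_gen_ideal A J \<and> regular_ideal A J \<longrightarrow> (\<exists>g. regular_elem A g \<and> generates A g J))"
  using pruefer_iff_regular_principal[OF local_nonunit_sums] .

lemma divisible_by_regular:
  assumes H: "\<forall>a \<in> m - zero_divisors A. I = ideal_smult A a I"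
    and c: "regular_elem A c" and w: "w \<in> I"
  shows "\<exists>w' \<in> I. w = c \<otimes> w'"
proof (cases "c \<in> m")
  case True
  then have "I = ideal_smult A c I" using H c by (simp add: regular_elem_def)
  then show ?thesis using w unfolding ideal_smult_def by blast
next
  case False
  have cc: "c \<in> carrier A" using c by (simp add: regular_iff)
  then have cu: "c \<in> Units A" using False nonunit_in_max by blast
  have "inv c \<otimes> w \<in> I" using ideal.I_l_closed[OF I_ideal w] cu by simp
  moreover have "w = c \<otimes> (inv c \<otimes> w)"
    using cu cc I_carrier[OF w] by (simp add: m_assoc[symmetric])
  ultimately show ?thesis by blast
qed

text \<open>Under the divisibility hypothesis, the second coordinate of an element (g, g') of the
  duplication with g regular is g times a unit, hence regular as well.\<close>
lemma dup_regular_snd: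
  assumes D: "\<And>c w. regular_elem A c \<Longrightarrow> w \<in> I \<Longrightarrow> \<exists>w' \<in> I. w = c \<otimes> w'"
    and z: "(g, g') \<in> carrier R" and g: "regular_elem A g"
  shows "regular_elem A g'"
proof -
  have gc: "g \<in> carrier A" "g' \<in> carrier A" "g' \<ominus> g \<in> I" using z by (auto simp: dup_carrier)
  obtain t where t: "t \<in> I" "g' \<ominus> g = g \<otimes> t" using D[OF g gc(3)] by blast
  have tc: "t \<in> carrier A" using I_carrier[OF t(1)] .
  have "\<one> \<oplus> t \<in> Units A" using unit_add_max t(1) I_in_max by blast
  moreover have "g' = g \<otimes> (\<one> \<oplus> t)"
  proof -
    have "g' = g \<oplus> (g' \<ominus> g)" using gc by algebra
    also have "\<dots> = g \<otimes> (\<one> \<oplus> t)" using t(2) gc tc by algebra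
    finally show ?thesis .
  qed
  ultimately show ?thesis using regular_mult_unit[OF g] by simp
qed

lemma dup_generator_divides:
  assumes D: "\<And>c w. regular_elem A c \<Longrightarrow> w \<in> I \<Longrightarrow> \<exists>w' \<in> I. w = c \<otimes> w'"
    and g: "(g, g') \<in> carrier R" "regular_elem A g"
    and z: "(x, x') \<in> carrier R" and y: "y \<in> carrier A" "x = g \<otimes> y"
  shows "\<exists>y' \<in> carrier R. (x, x') = (g, g') \<otimes>\<^bsub>R\<^esub> y'"
proof -
  interpret I: ideal I A by (rule I_ideal)
  have gc: "g \<in> carrier A" "g' \<in> carrier A" "g' \<ominus> g \<in> I" using g(1) by (auto simp: dup_carrier)
  have xc: "x \<in> carrier A" "x' \<in> carrier A" "x' \<ominus> x \<in> I" using z by (auto simp: dup_carrier)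
  have "x' \<ominus> g' \<otimes> y = (x' \<ominus> x) \<ominus> (g' \<ominus> g) \<otimes> y" using xc gc y by algebra
  then have "x' \<ominus> g' \<otimes> y \<in> I" using xc(3) I.I_r_closed[OF gc(3) y(1)] by (simp add: minus_eq)
  then obtain v where v: "v \<in> I" "x' \<ominus> g' \<otimes> y = g' \<otimes> v"
    using D[OF dup_regular_snd[OF D g]] by blast
  have vc: "v \<in> carrier A" using I_carrier[OF v(1)] .
  have "x' = (x' \<ominus> g' \<otimes> y) \<oplus> g' \<otimes> y" using xc gc y by algebra
  also have "\<dots> = g' \<otimes> (y \<oplus> v)" using v(2) gc y vc by algebra
  finally have "(x, x') = (g, g') \<otimes>\<^bsub>R\<^esub> (y, y \<oplus> v)" using y by simp
  moreover have "y \<oplus> v \<ominus> y = v" using y vc by algebra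
  then have "(y, y \<oplus> v) \<in> carrier R" using y vc v by (simp add: dup_carrier)
  ultimately show ?thesis by blast
qed

text \<open>Sufficiency: the first projection maps a finitely generated regular ideal J of the
  duplication onto one of A, whose regular generator g lifts to a generator (g, g') of J.\<close>
lemma pruefer_dup_of_divisible:
  assumes P: "pruefer_ring A"
    and D: "\<And>c w. regular_elem A c \<Longrightarrow> w \<in> I \<Longrightarrow> \<exists>w' \<in> I. w = c \<otimes> w'"
  shows "pruefer_ring R"
  unfolding pruefer_dup_iff
proof (intro allI impI)
  interpret fst: ring_hom_cring R A fst by (rule fst_hom)
  fix J assume "ideal J R \<and> fin_gen_ideal R J \<and> regular_ideal R J"
  then have J: "ideal J R" and fg: "fin_gen_ideal R J" and rg: "regular_ideal R J" by auto
  obtain S where S: "finite S" "S \<subseteq> carrier R" "J = Idl\<^bsub>R\<^esub> S"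
    using fg unfolding fin_gen_ideal_def by blast
  have fstJ: "fst ` J = Idl (fst ` S)" using fst.surj_hom_genideal[OF fst_surj S(2)] S(3) by simp
  have fstS: "fst ` S \<subseteq> carrier A" using S(2) by (auto simp: dup_carrier)
  obtain b where b: "b \<in> J" "regular_elem R b" using rg unfolding regular_ideal_def by blast
  have "ideal (fst ` J) A" using fstJ genideal_ideal[OF fstS] by simp
  moreover have "fin_gen_ideal A (fst ` J)"
    using fstJ S(1) fstS unfolding fin_gen_ideal_def by blast
  moreover have "regular_ideal A (fst ` J)"
    using b dup_regular_fst unfolding regular_ideal_def by blast
  ultimately obtain g where g: "regular_elem A g" "generates A g (fst ` J)"
    using P unfolding pruefer_iff by blast
  then have "g \<in> fst ` J" by (simp add: generates_def)
  then obtain g' where z0: "(g, g') \<in> J" by force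
  have z0c: "(g, g') \<in> carrier R" using ideal.Icarr[OF J z0] .
  have "regular_elem R (g, g')"
    using dup_regular_pair[OF z0c g(1) dup_regular_snd[OF D z0c g(1)]] .
  moreover have "generates R (g, g') J"
    unfolding generates_def
  proof (intro conjI ballI)
    fix z assume z: "z \<in> J"
    then obtain y where y: "y \<in> carrier A" "fst z = g \<otimes> y" using g(2) unfolding generates_def by blast
    have "(fst z, snd z) \<in> carrier R" using ideal.Icarr[OF J z] by simp
    from dup_generator_divides[OF D z0c g(1) this y]
    show "\<exists>y \<in> carrier R. z = (g, g') \<otimes>\<^bsub>R\<^esub> y" by simp
  qed (rule z0)
  ultimately show "\<exists>g. regular_elem R g \<and> generates R g J" by blast
qed

text \<open>Necessity of the Pruefer property of A: a finitely generated regular ideal J of A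
  lifts diagonally to one of the duplication, whose generator projects to a generator of J.\<close>
lemma pruefer_of_pruefer_dup:
  assumes P: "pruefer_ring R"
  shows "pruefer_ring A"
  unfolding pruefer_iff
proof (intro allI impI)
  interpret fst: ring_hom_cring R A fst by (rule fst_hom)
  interpret diag: ring_hom_cring A R "\<lambda>a. (a, a)" by (rule diag_hom)
  fix J assume "ideal J A \<and> fin_gen_ideal A J \<and> regular_ideal A J"
  then have J: "ideal J A" and fg: "fin_gen_ideal A J" and rg: "regular_ideal A J" by auto
  obtain S where S: "finite S" "S \<subseteq> carrier A" "J = Idl S"
    using fg unfolding fin_gen_ideal_def by blast
  obtain r where r: "r \<in> J" "regular_elem A r" using rg unfolding regular_ideal_def by blast
  define D where "D = (\<lambda>a. (a, a)) ` S"
  define J' where "J' = Idl\<^bsub>R\<^esub> D"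
  have Dc: "D \<subseteq> carrier R" using S(2) diag_in_dup unfolding D_def by blast
  have diagJ: "(\<lambda>a. (a, a)) ` J \<subseteq> J'"
    using diag.hom_genideal_subset[OF S(2)] unfolding S(3) J'_def D_def .
  have "fst ` J' \<subseteq> Idl (fst ` D)" using fst.hom_genideal_subset[OF Dc] unfolding J'_def .
  moreover have "fst ` D = S" unfolding D_def by (simp add: image_image)
  moreover have "J \<subseteq> fst ` J'"
  proof
    fix x assume "x \<in> J"
    then have "(x, x) \<in> J'" using diagJ by blast
    then show "x \<in> fst ` J'" by (rule image_eqI[rotated]) simp
  qed
  ultimately have fstJ': "fst ` J' = J" using S(3) by blast
  have "ideal J' R" unfolding J'_def using fst.R.genideal_ideal[OF Dc] .
  moreover have "fin_gen_ideal R J'"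
    using Dc S(1) unfolding fin_gen_ideal_def J'_def D_def by blast
  moreover have "regular_ideal R J'"
  proof -
    have "(r, r) \<in> J'" using diagJ r(1) by blast
    moreover have "regular_elem R (r, r)"
      using dup_regular_pair[OF diag_in_dup[OF ideal.Icarr[OF J r(1)]] r(2) r(2)] .
    ultimately show ?thesis unfolding regular_ideal_def by blast
  qed
  ultimately obtain z where z: "regular_elem R z" "generates R z J'"
    using P unfolding pruefer_dup_iff by blast
  have "J' \<subseteq> carrier R" using ideal.Icarr[OF \<open>ideal J' R\<close>] by blast
  from fst.hom_generates[OF z(2) this] have "generates A (fst z) J" unfolding fstJ' .
  then show "\<exists>g. regular_elem A g \<and> generates A g J" using dup_regular_fst[OF z(1)] by blast
qed

text \<open>A Nakayama-type cancellation: if i = (a c + i d) w with w in I, then i (1 - d w) lies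
  in aI and 1 - d w is a unit because d w lies in I, which is contained in m.\<close>
lemma absorb_into_multiple:
  assumes a: "a \<in> carrier A" and c: "c \<in> carrier A" and d: "d \<in> carrier A"
    and i: "i \<in> carrier A" and w: "w \<in> I" and eq: "i = (a \<otimes> c \<oplus> i \<otimes> d) \<otimes> w"
  shows "\<exists>w' \<in> I. i = a \<otimes> w'"
proof -
  interpret I: ideal I A by (rule I_ideal)
  have wc: "w \<in> carrier A" using I_carrier[OF w] .
  define v where "v = \<one> \<oplus> \<ominus> (d \<otimes> w)"
  have "\<ominus> (d \<otimes> w) \<in> m" using I.I_l_closed[OF w d] I_in_max by blast
  then have v: "v \<in> Units A" unfolding v_def using unit_add_max by blast
  have "i \<otimes> v = i \<ominus> i \<otimes> d \<otimes> w" unfolding v_def using i d wc by algebra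
  also have "\<dots> = (a \<otimes> c \<oplus> i \<otimes> d) \<otimes> w \<ominus> i \<otimes> d \<otimes> w"
    using eq by (rule arg_cong[where f = "\<lambda>x. x \<ominus> i \<otimes> d \<otimes> w"])
  also have "\<dots> = a \<otimes> (c \<otimes> w)" using a c d i wc by algebra
  finally have iv: "i \<otimes> v = a \<otimes> (c \<otimes> w)" .
  have "i = (i \<otimes> v) \<otimes> inv v" using i v by (simp add: m_assoc Units_closed)
  also have "\<dots> = a \<otimes> (c \<otimes> w \<otimes> inv v)" using iv a c wc v by (simp add: m_assoc)
  finally have "i = a \<otimes> (c \<otimes> w \<otimes> inv v)" .
  moreover have "c \<otimes> w \<otimes> inv v \<in> I" using I.I_l_closed[OF w c] I.I_r_closed v by simp
  ultimately show ?thesis by blast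
qed

text \<open>Necessity of the divisibility condition: for a regular a and i in I, a generator z of
  the ideal of the duplication generated by (a, a) and (0, i) has regular first coordinate,
  which forces (0, i) = z (0, w) with w in I; the second coordinates then give i in aI.\<close>
lemma divisible_of_pruefer_dup:
  assumes P: "pruefer_ring R" and a: "regular_elem A a" and i: "i \<in> I"
  shows "\<exists>w \<in> I. i = a \<otimes> w"
proof -
  interpret fst: ring_hom_cring R A fst by (rule fst_hom)
  have ac: "a \<in> carrier A" using a by (simp add: regular_iff)
  have ic: "i \<in> carrier A" using I_carrier[OF i] .
  have aa: "(a, a) \<in> carrier R" using diag_in_dup[OF ac] .
  have "i \<ominus> \<zero> = i" using ic by algebra
  then have zi: "(\<zero>, i) \<in> carrier R" using ic i by (simp add: dup_carrier)
  define J where "J = Idl\<^bsub>R\<^esub> {(a, a), (\<zero>, i)}"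
  have gens: "{(a, a), (\<zero>, i)} \<subseteq> carrier R" using aa zi by blast
  have inJ: "(a, a) \<in> J" "(\<zero>, i) \<in> J" using fst.R.genideal_self[OF gens] unfolding J_def by auto
  have "ideal J R" unfolding J_def using fst.R.genideal_ideal[OF gens] .
  moreover have "fin_gen_ideal R J"
    using gens unfolding fin_gen_ideal_def J_def by (intro exI[of _ "{(a, a), (\<zero>, i)}"]) simp
  moreover have "regular_ideal R J"
    unfolding regular_ideal_def using inJ(1) dup_regular_pair[OF aa a a] by (rule bexI[rotated])
  ultimately obtain z where "generates R z J" using P unfolding pruefer_dup_iff by blast
  then have z: "z \<in> J" "\<And>x. x \<in> J \<Longrightarrow> \<exists>y \<in> carrier R. x = z \<otimes>\<^bsub>R\<^esub> y"
    unfolding generates_def by blast+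
  obtain r s where rs: "r \<in> carrier R" "s \<in> carrier R"
    "z = r \<otimes>\<^bsub>R\<^esub> (a, a) \<oplus>\<^bsub>R\<^esub> s \<otimes>\<^bsub>R\<^esub> (\<zero>, i)"
    using fst.R.genideal_pair[OF aa zi] z(1) unfolding J_def by blast
  have rsc: "snd r \<in> carrier A" "snd s \<in> carrier A" using rs by (simp_all add: dup_carrier)
  obtain f where f: "f \<in> carrier R" "(a, a) = z \<otimes>\<^bsub>R\<^esub> f" using z(2)[OF inJ(1)] by blast
  obtain e where e: "e \<in> carrier R" "(\<zero>, i) = z \<otimes>\<^bsub>R\<^esub> e" using z(2)[OF inJ(2)] by blast
  have zc: "fst z \<in> carrier A" using ideal.Icarr[OF \<open>ideal J R\<close> z(1)] by (simp add: dup_carrier)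
  have ec: "fst e \<in> carrier A" "snd e \<in> carrier A" "snd e \<ominus> fst e \<in> I"
    using e(1) by (simp_all add: dup_carrier)
  have "a = fst z \<otimes> fst f" using arg_cong[OF f(2), of fst] by simp
  moreover have "fst f \<in> carrier A" using f(1) by (simp add: dup_carrier)
  ultimately have "regular_elem A (fst z)" using regular_divisor[OF a _ zc] by blast
  moreover have "fst z \<otimes> fst e = \<zero>" using arg_cong[OF e(2), of fst] by simp
  ultimately have "fst e = \<zero>" using ec(1) unfolding regular_iff by blast
  then have w: "snd e \<in> I" using ec by (simp add: minus_eq)
  have "i = snd z \<otimes> snd e" using e(2) by simp
  also have "\<dots> = (a \<otimes> snd r \<oplus> i \<otimes> snd s) \<otimes> snd e" using rs(3) ac ic rsc by (simp add: m_comm)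
  finally show ?thesis using absorb_into_multiple[OF ac rsc ic w] by blast
qed

end

theorem corollary2p7:
  fixes A :: "('a, 'b) ring_scheme" and m I :: "'a set"
  assumes "local_ring_max A m"
    and "ideal I A" and "I \<noteq> carrier A"
  shows "pruefer_ring (amalg_dup A I) \<longleftrightarrow>
           (pruefer_ring A \<and> (\<forall>a \<in> m - zero_divisors A. I = ideal_smult A a I))"
proof -
  interpret local_amalgamation A m I
    using assms unfolding local_amalgamation_def local_amalgamation_axioms_def local_ring_def
      local_ring_axioms_def amalgamation_def amalgamation_axioms_def local_ring_max_def
    by blast
  show ?thesis
  proof
    assume P: "pruefer_ring R"
    have "I = ideal_smult A a I" if "a \<in> m - zero_divisors A" for a
    proof -
      have "regular_elem A a" using that ideal.Icarr[OF max_ideal] by (simp add: regular_elem_def)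
      then show ?thesis
        using divisible_of_pruefer_dup[OF P] smult_eq_iff by (simp add: regular_iff)
    qed
    then show "pruefer_ring A \<and> (\<forall>a \<in> m - zero_divisors A. I = ideal_smult A a I)"
      using pruefer_of_pruefer_dup[OF P] by blast
  next
    assume "pruefer_ring A \<and> (\<forall>a \<in> m - zero_divisors A. I = ideal_smult A a I)"
    then show "pruefer_ring R" using pruefer_dup_of_divisible divisible_by_regular by blast
  qed
qed

end
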